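(* Let $\{M_i\}_i\subseteq\mathbb C^{d_1\times d_1}$ be a finite family of matrices and let $\{N_i\}_i\subseteq\mathbb C^{d_2\times d_2}$ be Hermitian matrices (indexed by the same index set) satisfying $N_i^2=I_{d_2}$ and $\mathrm{Tr}[N_iN_j]=d_2\,\delta_{i,j}$. Then the operator $T=\sum_i M_i\otimes N_i$ satisfies $\|T\|\ge\|M_i\|$ for every $i$.
   Context: $\|\cdot\|$ denotes the operator norm and $\delta_{i,j}$ the Kronecker delta. *)

theory Defs
  imports "HOL-Analysis.Analysis"
begin

definition cadjoint :: "complex^'n^'m \<Rightarrow> complex^'m^'n" where
  "cadjoint A = (\<chi> i j. cnj (A $ j $ i))"

definition hermitian :: "complex^'n^'n \<Rightarrow> bool" where
  "hermitian A \<longleftrightarrow> cadjoint A = A"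

definition kron :: "complex^'n^'n \<Rightarrow> complex^'m^'m \<Rightarrow> complex^('n \<times> 'm)^('n \<times> 'm)" where
  "kron A B = (\<chi> p q. A $ fst p $ fst q * B $ snd p $ snd q)"

definition opnorm :: "complex^'n^'m \<Rightarrow> real" where
  "opnorm A = onorm (\<lambda>x. A *v x)"

end

theory Submission
  imports Defs
begin

text \<open>Write \<open>Tr\<^sub>2\<close> for the partial trace over the second tensor factor and
  \<open>d = d\<^sub>2\<close>. By the orthogonality relations,
  \<open>Tr\<^sub>2 (T (I \<otimes> N\<^sub>i)) = \<Sum>\<^sub>j Tr (N\<^sub>j N\<^sub>i) M\<^sub>j = d M\<^sub>i\<close>.
  Since \<open>Tr\<^sub>2 A = \<Sum>\<^sub>k (I \<otimes> e\<^sub>k)\<^sup>* A (I \<otimes> e\<^sub>k)\<close> is a sum of \<open>d\<close> compressions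
  of \<open>A\<close>, it satisfies \<open>\<parallel>Tr\<^sub>2 A\<parallel> \<le> d \<parallel>A\<parallel>\<close>; and \<open>I \<otimes> N\<^sub>i\<close> is unitary because \<open>N\<^sub>i\<close>
  is a Hermitian involution. Hence \<open>d \<parallel>M\<^sub>i\<parallel> \<le> d \<parallel>T\<parallel>\<close>.\<close>

definition partial_trace :: "complex^('n::finite \<times> 'm::finite)^('n \<times> 'm) \<Rightarrow> complex^'n^'n" where
  "partial_trace A = (\<chi> a b. \<Sum>k\<in>UNIV. A $ (a, k) $ (b, k))"

lemma sum_UNIV_prod:
  "(\<Sum>p\<in>(UNIV::('a::finite \<times> 'b::finite) set). f p) = (\<Sum>a\<in>UNIV. \<Sum>b\<in>UNIV. f (a, b))"
  by (simp add: UNIV_Times_UNIV[symmetric] sum.cartesian_product del: UNIV_Times_UNIV)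

lemma norm_vec_power2: "norm (v::'a::real_normed_vector^'n) ^ 2 = (\<Sum>i\<in>UNIV. norm (v $ i) ^ 2)"
  by (simp add: norm_vec_def L2_set_def sum_nonneg)

lemma of_real_norm_vec_power2:
  "complex_of_real (norm (v::complex^'n) ^ 2) = (\<Sum>i\<in>UNIV. v $ i * cnj (v $ i))"
  by (simp only: norm_vec_power2 of_real_sum complex_norm_square)

lemma
  fixes v :: "'a::real_normed_vector^('n::finite \<times> 'm::finite)"
  shows norm_vec_curry: "norm (\<chi> a k. v $ (a, k)) = norm v"
    and norm_vec_curry_swap: "norm (\<chi> k a. v $ (a, k)) = norm v"
proof -
  have "norm (\<chi> a k. v $ (a, k)) ^ 2 = norm v ^ 2"
    by (simp add: norm_vec_power2 sum_UNIV_prod)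
  then show "norm (\<chi> a k. v $ (a, k)) = norm v"
    by (simp add: power2_eq_iff_nonneg)
  have "norm (\<chi> k a. v $ (a, k)) ^ 2 = norm v ^ 2"
    by (simp add: norm_vec_power2 sum_UNIV_prod) (rule sum.swap)
  then show "norm (\<chi> k a. v $ (a, k)) = norm v"
    by (simp add: power2_eq_iff_nonneg)
qed

lemma norm_vec_slice_le:
  fixes v :: "'a::real_normed_vector^('n::finite \<times> 'm::finite)"
  shows "norm (\<chi> a. v $ (a, k)) \<le> norm v"
proof -
  have "norm ((\<chi> k a. v $ (a, k)) $ k) \<le> norm (\<chi> k a. v $ (a, k))"
    by (rule Finite_Cartesian_Product.norm_nth_le)
  then show ?thesis
    by (simp add: norm_vec_curry_swap)
qed

lemma norm_unitary_mult_vec: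
  fixes U :: "complex^'n^'n"
  assumes "cadjoint U ** U = mat 1"
  shows "norm (U *v w) = norm w"
proof -
  have "complex_of_real (norm (U *v w) ^ 2) = (\<Sum>k\<in>UNIV. (U *v w) $ k * cnj ((U *v w) $ k))"
    by (rule of_real_norm_vec_power2)
  also have "\<dots> = (\<Sum>k\<in>UNIV. \<Sum>l'\<in>UNIV. \<Sum>l\<in>UNIV.
                      cnj (w $ l') * w $ l * (cnj (U $ k $ l') * U $ k $ l))"
    by (simp add: matrix_vector_mult_def sum_distrib_left sum_distrib_right mult_ac)
  also have "\<dots> = (\<Sum>l'\<in>UNIV. \<Sum>l\<in>UNIV. \<Sum>k\<in>UNIV.
                      cnj (w $ l') * w $ l * (cnj (U $ k $ l') * U $ k $ l))"
    by (subst sum.swap) (rule sum.cong[OF refl], rule sum.swap)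
  also have "\<dots> = (\<Sum>l'\<in>UNIV. \<Sum>l\<in>UNIV. cnj (w $ l') * w $ l * (cadjoint U ** U) $ l' $ l)"
    by (simp add: cadjoint_def matrix_matrix_mult_def sum_distrib_left)
  also have "\<dots> = (\<Sum>l\<in>UNIV. w $ l * cnj (w $ l))"
    by (simp add: assms mat_def if_distrib if_distribR mult.commute cong: if_cong)
  also have "\<dots> = complex_of_real (norm w ^ 2)"
    by (rule of_real_norm_vec_power2[symmetric])
  finally have "norm (U *v w) ^ 2 = norm w ^ 2"
    by (simp only: of_real_eq_iff)
  then show ?thesis
    by (simp add: power2_eq_iff_nonneg)
qed

lemma kron_mult_kron: "kron A B ** kron C D = kron (A ** C) (B ** D)"
  by (simp add: vec_eq_iff kron_def matrix_matrix_mult_def sum_UNIV_prod sum_product mult_ac)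

lemma sum_matrix_mult: "(\<Sum>j\<in>J. A j) ** B = (\<Sum>j\<in>J. A j ** B)"
  by (simp add: vec_eq_iff matrix_matrix_mult_def sum_distrib_right) (intro allI sum.swap)

lemma partial_trace_sum: "partial_trace (\<Sum>j\<in>J. A j) = (\<Sum>j\<in>J. partial_trace (A j))"
  by (simp add: vec_eq_iff partial_trace_def) (intro allI sum.swap)

lemma partial_trace_kron: "partial_trace (kron A B) = (\<chi> a b. trace B * A $ a $ b)"
  by (simp add: vec_eq_iff partial_trace_def kron_def trace_def sum_distrib_left mult.commute)

lemma opnorm_nonneg: "0 \<le> opnorm (A::complex^'n^'m)"
  unfolding opnorm_def by (rule onorm_pos_le) simp

lemma opnorm_mult_le: "opnorm (A ** B) \<le> opnorm A * opnorm (B::complex^'n^'m)"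
proof -
  have "(*v) (A ** B) = (*v) A \<circ> (*v) B"
    by (simp add: fun_eq_iff matrix_vector_mul_assoc)
  then show ?thesis
    unfolding opnorm_def by (metis matrix_vector_mul_bounded_linear onorm_compose)
qed

lemma opnorm_scaleR: "opnorm (r *\<^sub>R A) = \<bar>r\<bar> * opnorm (A::complex^'n^'m)"
proof -
  have "(*v) (r *\<^sub>R A) = (\<lambda>x. r *\<^sub>R (A *v x))"
    by (simp add: fun_eq_iff vec_eq_iff matrix_vector_mult_def scaleR_sum_right)
  then show ?thesis
    unfolding opnorm_def by (simp add: onorm_scaleR)
qed

lemma opnorm_partial_trace_le:
  fixes A :: "complex^('n::finite \<times> 'm::finite)^('n \<times> 'm)"
  shows "opnorm (partial_trace A) \<le> real CARD('m) * opnorm A"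
  unfolding opnorm_def
proof (rule onorm_le)
  fix x :: "complex^'n"
  \<comment> \<open>\<open>e k = x \<otimes> \<delta>\<^sub>k\<close>, with \<open>\<delta>\<^sub>k\<close> the \<open>k\<close>-th standard basis vector\<close>
  define e where "e k = (\<chi> p. if snd p = k then x $ fst p else 0)" for k :: 'm
  have norm_e: "norm (e k) = norm x" for k
  proof -
    have "norm (e k) ^ 2 = norm x ^ 2"
      by (simp add: norm_vec_power2 sum_UNIV_prod e_def if_distrib[of "\<lambda>z. norm z ^ 2"] cong: if_cong)
    then show ?thesis
      by (simp add: power2_eq_iff_nonneg)
  qed
  have "partial_trace A *v x = (\<Sum>k\<in>UNIV. \<chi> a. (A *v e k) $ (a, k))"
    by (simp add: vec_eq_iff partial_trace_def matrix_vector_mult_def e_def sum_UNIV_prod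
        sum_distrib_right if_distrib if_distribR cong: if_cong) (intro allI sum.swap)
  then have "norm (partial_trace A *v x) \<le> (\<Sum>k\<in>UNIV. norm (\<chi> a. (A *v e k) $ (a, k)))"
    by (simp add: norm_sum)
  also have "\<dots> \<le> (\<Sum>k\<in>(UNIV::'m set). onorm ((*v) A) * norm x)"
  proof (rule sum_mono)
    fix k
    have "norm (\<chi> a. (A *v e k) $ (a, k)) \<le> norm (A *v e k)"
      by (rule norm_vec_slice_le)
    also have "\<dots> \<le> onorm ((*v) A) * norm x"
      using onorm[OF matrix_vector_mul_bounded_linear, of A "e k"] by (simp add: norm_e)
    finally show "norm (\<chi> a. (A *v e k) $ (a, k)) \<le> onorm ((*v) A) * norm x" .
  qed
  finally show "norm (partial_trace A *v x) \<le> real CARD('m) * onorm ((*v) A) * norm x"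
    by (simp add: mult.assoc)
qed

lemma opnorm_kron_id_unitary_le:
  fixes U :: "complex^'m^'m"
  assumes "cadjoint U ** U = mat 1"
  shows "opnorm (kron (mat 1 :: complex^'n^'n) U) \<le> 1"
  unfolding opnorm_def
proof (rule onorm_le)
  fix v :: "complex^('n \<times> 'm)"
  have blocks: "(\<chi> a k. (kron (mat 1) U *v v) $ (a, k)) = (\<chi> a. U *v (\<chi> l. v $ (a, l)))"
    by (simp add: vec_eq_iff kron_def matrix_vector_mult_def sum_UNIV_prod mat_def mult.assoc
        flip: sum_distrib_left of_bool_def)
  have "norm (kron (mat 1) U *v v) = norm (\<chi> a. U *v (\<chi> l. v $ (a, l)))"
    by (simp only: norm_vec_curry flip: blocks)
  also have "\<dots> \<le> norm (\<chi> a l. v $ (a, l))"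
    by (rule norm_le_componentwise_cart) (simp add: norm_unitary_mult_vec[OF assms])
  finally show "norm (kron (mat 1) U *v v) \<le> 1 * norm v"
    by (simp add: norm_vec_curry)
qed

theorem lemma4p3:
  fixes I :: "'i set"
    and M :: "'i \<Rightarrow> complex^'d1^'d1"
    and N :: "'i \<Rightarrow> complex^'d2^'d2"
  assumes "finite I"
    and "\<And>i. i \<in> I \<Longrightarrow> hermitian (N i)"
    and "\<And>i. i \<in> I \<Longrightarrow> N i ** N i = mat 1"
    and "\<And>i j. i \<in> I \<Longrightarrow> j \<in> I \<Longrightarrow>
           trace (N i ** N j) = (if i = j then of_nat CARD('d2) else 0)"
  shows "\<forall>i\<in>I. opnorm (M i) \<le> opnorm (\<Sum>j\<in>I. kron (M j) (N j))"
proof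
  fix i assume i: "i \<in> I"
  define T where "T = (\<Sum>j\<in>I. kron (M j) (N j))"
  let ?d = "real CARD('d2)"
  have "partial_trace (T ** kron (mat 1) (N i)) = (\<Sum>j\<in>I. \<chi> a b. trace (N j ** N i) * M j $ a $ b)"
    by (simp add: T_def sum_matrix_mult kron_mult_kron partial_trace_sum partial_trace_kron)
  also have "\<dots> = (\<chi> a b. of_nat CARD('d2) * M i $ a $ b)"
    using assms(1,4) i by (simp add: vec_eq_iff if_distrib[of "\<lambda>z. z * _"] cong: if_cong)
  also have "\<dots> = ?d *\<^sub>R M i"
    by (simp add: vec_eq_iff) (simp add: scaleR_conv_of_real)
  finally have "?d * opnorm (M i) = opnorm (partial_trace (T ** kron (mat 1) (N i)))"
    by (simp add: opnorm_scaleR)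
  also have "\<dots> \<le> ?d * opnorm (T ** kron (mat 1) (N i))"
    by (rule opnorm_partial_trace_le)
  also have "\<dots> \<le> ?d * (opnorm T * opnorm (kron (mat 1 :: complex^'d1^'d1) (N i)))"
    by (intro mult_left_mono opnorm_mult_le) simp
  also have "\<dots> \<le> ?d * opnorm T"
  proof -
    have "cadjoint (N i) ** N i = mat 1"
      using assms(2,3) i by (simp add: hermitian_def)
    then have "opnorm (kron (mat 1 :: complex^'d1^'d1) (N i)) \<le> 1"
      by (rule opnorm_kron_id_unitary_le)
    then show ?thesis
      by (intro mult_left_mono mult_left_le opnorm_nonneg) simp_all
  qed
  finally show "opnorm (M i) \<le> opnorm T"
    by simp
qed
end
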